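(* Let $k$ be a positive definite kernel on $\mathcal{Z}$ with $k(z,z)\le1$ and RKHS $\mathcal{H}_k$, let $f\in\mathcal{H}_k$, and let $\lambda>0$. Let $\mu^{t,f}(\cdot)=k_{Z^t}(\cdot)^\top(K_{Z^t}+\lambda^2I)^{-1}Y_{Z^t}$ be the kernel ridge predictor computed from $t$ noisy observations $Y(z^i)=f(z^i)+\varepsilon^i$, $i=1,\dots,t$, at points $Z^t=\{z^i\}_{i=1}^t$, where the noise terms are zero-mean and $\sigma$-sub-Gaussian. Then for $\delta>0$, with probability at least $1-\delta$, $$\|\mu^{t,f}\|_{\mathcal{H}_k}\le\|f\|_{\mathcal{H}_k}+\frac{\sigma}{\lambda}\sqrt{2\left(\Gamma_{k,\lambda}(t)+1+\log\frac1\delta\right)}.$$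
   Context: $k_{Z^t}(z)=[k(z,z^i)]_{i=1}^t$, $K_{Z^t}=[k(z^i,z^j)]_{i,j=1}^t$, $Y_{Z^t}=[Y(z^i)]_{i=1}^t$. The maximum information gain is $\Gamma_{k,\lambda}(t)=\max_{Z\subset\mathcal{Z},|Z|=t}\frac12\log\det(I+\lambda^{-2}K_Z)$.
   Formalization: The noise terms $\varepsilon^i$ are also mutually independent, and $\Gamma_{k,\lambda}(t)$ is the supremum over t-tuples of points, repetitions allowed, rather than the maximum over sets Z with |Z|=t. Apart from conventions, each condition added here is assumed in the paper as well or is needed for the statement above to hold. *)

theory Defs
  imports "HOL-Analysis.Analysis" "HOL-Probability.Probability"
begin

definition pd_kernel :: "('z \<Rightarrow> 'z \<Rightarrow> real) \<Rightarrow> bool" where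
  "pd_kernel k \<longleftrightarrow> (\<forall>x y. k x y = k y x) \<and>
     (\<forall>(n::nat) (xs::nat \<Rightarrow> 'z) (c::nat \<Rightarrow> real).
        0 \<le> (\<Sum>i<n. \<Sum>j<n. c i * c j * k (xs i) (xs j)))"

text \<open>RKHS membership and norm (Aronszajn): f is in H_k iff there is C with
  (sum_i c_i f(x_i))^2 <= C * sum_ij c_i c_j k(x_i,x_j) for all finite families;
  the squared RKHS norm is the least such C.\<close>
definition rkhs_bound :: "('z \<Rightarrow> 'z \<Rightarrow> real) \<Rightarrow> ('z \<Rightarrow> real) \<Rightarrow> real \<Rightarrow> bool" where
  "rkhs_bound k f C \<longleftrightarrow> (\<forall>(n::nat) (xs::nat \<Rightarrow> 'z) (c::nat \<Rightarrow> real).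
      (\<Sum>i<n. c i * f (xs i))\<^sup>2 \<le> C * (\<Sum>i<n. \<Sum>j<n. c i * c j * k (xs i) (xs j)))"

definition in_rkhs :: "('z \<Rightarrow> 'z \<Rightarrow> real) \<Rightarrow> ('z \<Rightarrow> real) \<Rightarrow> bool" where
  "in_rkhs k f \<longleftrightarrow> (\<exists>C. rkhs_bound k f C)"

definition rkhs_norm :: "('z \<Rightarrow> 'z \<Rightarrow> real) \<Rightarrow> ('z \<Rightarrow> real) \<Rightarrow> real" where
  "rkhs_norm k f = sqrt (Inf {C. 0 \<le> C \<and> rkhs_bound k f C})"

text \<open>Gram matrix of points indexed by a finite type 'n (t = CARD('n)).\<close>
definition gram :: "('z \<Rightarrow> 'z \<Rightarrow> real) \<Rightarrow> ('n::finite \<Rightarrow> 'z) \<Rightarrow> real^'n^'n" where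
  "gram k zs = (\<chi> i j. k (zs i) (zs j))"

text \<open>Maximum information gain Gamma_{k,lambda}(t) with t = CARD('n): supremum over all
  t-tuples of points (repetitions allowed) of 1/2 log det(I + lambda^-2 K).\<close>
definition max_info_gain :: "('z \<Rightarrow> 'z \<Rightarrow> real) \<Rightarrow> real \<Rightarrow> 'n::finite itself \<Rightarrow> real" where
  "max_info_gain k lam (t::'n itself) =
     (SUP zs \<in> (UNIV :: ('n \<Rightarrow> 'z) set).
        ln (det (mat 1 + (1 / lam\<^sup>2) *\<^sub>R gram k zs)) / 2)"

definition krr_pred :: "('z \<Rightarrow> 'z \<Rightarrow> real) \<Rightarrow> real \<Rightarrow> ('n::finite \<Rightarrow> 'z) \<Rightarrow> real^'n \<Rightarrow> 'z \<Rightarrow> real" where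
  "krr_pred k lam zs Y x =
     (\<Sum>i\<in>UNIV. k x (zs i) * (matrix_inv (gram k zs + lam\<^sup>2 *\<^sub>R mat 1) *v Y) $ i)"

definition (in prob_space) subgaussian :: "real \<Rightarrow> ('a \<Rightarrow> real) \<Rightarrow> bool" where
  "subgaussian \<sigma> X \<longleftrightarrow> random_variable borel X \<and> integrable M X \<and> expectation X = 0 \<and>
     (\<forall>s::real. integrable M (\<lambda>\<omega>. exp (s * X \<omega>)) \<and>
        expectation (\<lambda>\<omega>. exp (s * X \<omega>)) \<le> exp (s\<^sup>2 * \<sigma>\<^sup>2 / 2))"

end

theory Submission
  imports Defs
begin

(* Let K = sum_j kappa_j u_j u_j^T be the spectral decomposition of the Gram matrix. The predictor
   is the kernel expansion with coefficients (K + lam^2 I)^-1 Y, whose squared RKHS norm is at most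
   the quadratic form of K in those coefficients. Splitting Y into f(Z) and the noise eps, the
   triangle inequality bounds the signal part by the norm of f and the noise part by the square
   root of sum_j q_j (u_j . eps)^2 / lam^2, where q_j = kappa_j / (kappa_j + lam^2).
   Writing exp(|x|^2/2) as the moment generating function of a standard Gaussian vector and
   averaging over the independent sub-Gaussian noise first gives
   E exp(sum_j q_j (u_j . eps)^2 / (2 sigma^2)) <= prod_j (1 - q_j)^(-1/2) = det(I + K/lam^2)^(1/2),
   which is at most exp Gamma, and Chernoff's inequality turns this into the stated bound. *)

section \<open>Symmetric matrices\<close>

lemma quadratic_nonneg_imp_discriminant_le:
  fixes a b c :: real
  assumes "\<And>s. 0 \<le> a + 2 * s * b + s\<^sup>2 * c" "0 \<le> a" "0 \<le> c"
  shows "b\<^sup>2 \<le> a * c"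
proof (cases "c = 0")
  case True
  have "b = 0"
  proof (rule ccontr)
    assume "b \<noteq> 0"
    have "0 \<le> a + 2 * (- (a + 1) / (2 * b)) * b + (- (a + 1) / (2 * b))\<^sup>2 * c" by (rule assms(1))
    also have "\<dots> = -1" using True \<open>b \<noteq> 0\<close> by (simp add: field_simps)
    finally show False by simp
  qed
  thus ?thesis using True by simp
next
  case False
  hence c: "c > 0" using assms(3) by simp
  have "0 \<le> a + 2 * (- b / c) * b + (- b / c)\<^sup>2 * c" by (rule assms(1))
  also have "\<dots> = (a * c - b\<^sup>2) / c" using c by (simp add: field_simps power2_eq_square)
  finally show ?thesis using c by (simp add: zero_le_divide_iff)
qed

lemma inner_symmetric_matrix_vector:
  fixes Q :: "real^'n^'n"
  assumes "transpose Q = Q"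
  shows "(Q *v x) \<bullet> y = x \<bullet> (Q *v y)"
  by (metis assms dot_lmul_matrix transpose_matrix_vector)

text \<open>The maximiser of the Rayleigh quotient on the unit sphere of \<open>S\<close> is an eigenvector.\<close>
lemma symmetric_matrix_invariant_subspace_eigenvector:
  fixes Q :: "real^'n^'n"
  assumes sym: "transpose Q = Q" and S: "subspace S" "S \<noteq> {0}"
    and inv: "\<And>x. x \<in> S \<Longrightarrow> Q *v x \<in> S"
  obtains x \<mu> where "x \<in> S" "norm x = 1" "Q *v x = \<mu> *\<^sub>R x"
proof -
  define T where "T = sphere 0 1 \<inter> S"
  obtain s where s: "s \<in> S" "s \<noteq> 0" using S subspace_0 by blast
  have "s /\<^sub>R norm s \<in> T" using s S(1) by (auto simp: T_def subspace_scale)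
  moreover have "compact T"
    unfolding T_def using S(1) by (intro compact_Int_closed compact_sphere closed_subspace)
  moreover have "continuous_on T (\<lambda>x. x \<bullet> (Q *v x))" by (intro continuous_intros)
  ultimately obtain x where xT: "x \<in> T" and xmax: "\<And>y. y \<in> T \<Longrightarrow> y \<bullet> (Q *v y) \<le> x \<bullet> (Q *v x)"
    using continuous_attains_sup[of T "\<lambda>x. x \<bullet> (Q *v x)"] by blast
  define \<mu> where "\<mu> = x \<bullet> (Q *v x)"
  have xS: "x \<in> S" and xx: "x \<bullet> x = 1" using xT by (auto simp: T_def norm_eq_1)
  have rayleigh: "z \<bullet> (Q *v z) \<le> \<mu> * (z \<bullet> z)" if "z \<in> S" for z
  proof (cases "z = 0")
    case False
    have "z /\<^sub>R norm z \<in> T" using that S(1) False by (auto simp: T_def subspace_scale)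
    hence "(z /\<^sub>R norm z) \<bullet> (Q *v (z /\<^sub>R norm z)) \<le> \<mu>" using xmax \<mu>_def by blast
    hence "(z \<bullet> (Q *v z)) / (norm z)\<^sup>2 \<le> \<mu>"
      by (simp add: matrix_vector_mult_scaleR power2_eq_square divide_inverse mult_ac)
    thus ?thesis using False by (simp add: divide_le_eq power2_norm_eq_inner)
  qed simp
  define y where "y = Q *v x - \<mu> *\<^sub>R x"
  have yS: "y \<in> S" unfolding y_def using S(1) inv xS by (simp add: subspace_diff subspace_scale)
  have xy: "x \<bullet> y = 0" using xx by (simp add: y_def \<mu>_def inner_diff_right)
  have yQx: "y \<bullet> (Q *v x) = y \<bullet> y"
    using xy by (simp add: y_def inner_diff_right inner_commute)
  have "(y \<bullet> y)\<^sup>2 \<le> 0 * (\<mu> * (y \<bullet> y) - y \<bullet> (Q *v y))"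
  proof (rule quadratic_nonneg_imp_discriminant_le)
    fix t :: real
    have "x - t *\<^sub>R y \<in> S" using xS yS S(1) by (simp add: subspace_diff subspace_scale)
    from rayleigh[OF this] have
      "(x - t *\<^sub>R y) \<bullet> (Q *v (x - t *\<^sub>R y)) \<le> \<mu> * ((x - t *\<^sub>R y) \<bullet> (x - t *\<^sub>R y))" .
    moreover have "x \<bullet> (Q *v y) = y \<bullet> (Q *v x)"
      using inner_symmetric_matrix_vector[OF sym, of y x] by (simp add: inner_commute)
    ultimately show "0 \<le> 0 + 2 * t * (y \<bullet> y) + t\<^sup>2 * (\<mu> * (y \<bullet> y) - y \<bullet> (Q *v y))"
      using xx xy yQx
      by (simp add: matrix_vector_mult_diff_distrib matrix_vector_mult_scaleR inner_diff_left
          inner_diff_right inner_commute \<mu>_def power2_eq_square algebra_simps)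
  qed (use rayleigh[OF yS] in auto)
  hence "y = 0" by simp
  with xS xx show ?thesis by (intro that[of x \<mu>]) (auto simp: y_def norm_eq_1)
qed

lemma subspace_subset_span_insert_orthogonal:
  assumes S: "subspace S" and x: "x \<in> S" "x \<bullet> x = 1" and B: "span B = S \<inter> {y. x \<bullet> y = 0}"
  shows "S \<subseteq> span (insert x B)"
proof
  fix z assume z: "z \<in> S"
  have "z - (x \<bullet> z) *\<^sub>R x \<in> span B" unfolding B using z x S
    by (auto simp: subspace_diff subspace_scale inner_diff_right)
  hence "z - (x \<bullet> z) *\<^sub>R x \<in> span (insert x B)" using span_mono[of B "insert x B"] by auto
  hence "(z - (x \<bullet> z) *\<^sub>R x) + (x \<bullet> z) *\<^sub>R x \<in> span (insert x B)"
    by (intro span_add) (simp_all add: span_base span_scale)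
  thus "z \<in> span (insert x B)" by simp
qed

lemma symmetric_matrix_invariant_subspace_orthonormal_eigenbasis:
  fixes Q :: "real^'n^'n"
  assumes sym: "transpose Q = Q" and "subspace S" and "\<And>x. x \<in> S \<Longrightarrow> Q *v x \<in> S"
  shows "\<exists>B \<subseteq> S. span B = S \<and> pairwise orthogonal B \<and> (\<forall>x\<in>B. norm x = 1 \<and> (\<exists>\<mu>. Q *v x = \<mu> *\<^sub>R x))"
  using assms(2,3)
proof (induction "dim S" arbitrary: S rule: less_induct)
  case less
  show ?case
  proof (cases "S = {0}")
    case True
    then show ?thesis by (intro exI[of _ "{}"]) auto
  next
    case False
    obtain x \<mu> where xS: "x \<in> S" and xn: "norm x = 1" and eig: "Q *v x = \<mu> *\<^sub>R x"
      using symmetric_matrix_invariant_subspace_eigenvector[OF sym less.prems(1) False less.prems(2)] .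
    have xx: "x \<bullet> x = 1" using xn by (simp add: norm_eq_1)
    define S' where "S' = S \<inter> {y. x \<bullet> y = 0}"
    have S': "subspace S'" unfolding S'_def
      using less.prems(1) by (intro subspace_inter) (auto simp: subspace_def inner_add_right)
    have inv': "Q *v y \<in> S'" if "y \<in> S'" for y
    proof -
      have "x \<bullet> (Q *v y) = \<mu> * (x \<bullet> y)"
        using inner_symmetric_matrix_vector[OF sym, of x y] eig by simp
      with that less.prems(2) show ?thesis by (auto simp: S'_def)
    qed
    have "x \<notin> S'" using xx by (simp add: S'_def)
    hence "S' \<subset> S" using xS unfolding S'_def by blast
    hence "dim S' < dim S"
      using S' less.prems(1) by (intro dim_psubset) (simp add: span_eq_iff[THEN iffD2])
    from less.hyps[OF this S' inv'] obtain B where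
      B: "B \<subseteq> S'" "span B = S'" "pairwise orthogonal B" "\<forall>x\<in>B. norm x = 1 \<and> (\<exists>\<mu>. Q *v x = \<mu> *\<^sub>R x)"
      by blast
    have "S \<subseteq> span (insert x B)"
      using subspace_subset_span_insert_orthogonal[OF less.prems(1) xS xx] B(2) by (simp add: S'_def)
    moreover have "insert x B \<subseteq> S" using B(1) xS by (auto simp: S'_def)
    ultimately show ?thesis
      using B(1,3,4) xn eig less.prems(1) span_minimal[of "insert x B" S]
      by (intro exI[of _ "insert x B"])
         (auto simp: pairwise_insert S'_def orthogonal_def inner_commute)
  qed
qed

lemma inner_sum_scaleR_orthonormal:
  fixes u :: "'n::finite \<Rightarrow> 'a::real_inner"
  assumes "\<And>i j. u i \<bullet> u j = (if i = j then 1 else 0)"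
  shows "(\<Sum>j\<in>UNIV. c j *\<^sub>R u j) \<bullet> (\<Sum>j\<in>UNIV. d j *\<^sub>R u j) = (\<Sum>j\<in>UNIV. c j * d j)"
  by (simp add: inner_sum_left inner_sum_right assms if_distrib mult.commute cong: if_cong)

lemma orthonormal_spanning_expansion:
  fixes u :: "'n::finite \<Rightarrow> 'a::real_inner"
  assumes orthonormal: "\<And>i j. u i \<bullet> u j = (if i = j then 1 else 0)" and span: "span (range u) = UNIV"
  shows "x = (\<Sum>j\<in>UNIV. (u j \<bullet> x) *\<^sub>R u j)"
proof -
  define v where "v = x - (\<Sum>j\<in>UNIV. (u j \<bullet> x) *\<^sub>R u j)"
  have "u j \<bullet> v = 0" for j
    by (simp add: v_def inner_diff_right inner_sum_right orthonormal if_distrib cong: if_cong)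
  hence "orthogonal v v"
    using span by (intro orthogonal_to_span[of v "range u"]) (auto simp: orthogonal_def inner_commute)
  thus ?thesis by (simp add: v_def orthogonal_def)
qed

locale orthonormal_eigenbasis =
  fixes Q :: "real^'n::finite^'n" and u :: "'n \<Rightarrow> real^'n" and \<kappa> :: "'n \<Rightarrow> real"
  assumes orthonormal: "u i \<bullet> u j = (if i = j then 1 else 0)"
    and eigenvector: "Q *v u j = \<kappa> j *\<^sub>R u j"
    and expansion: "x = (\<Sum>j\<in>UNIV. (u j \<bullet> x) *\<^sub>R u j)"

theorem symmetric_matrix_has_orthonormal_eigenbasis:
  fixes Q :: "real^'n::finite^'n"
  assumes sym: "transpose Q = Q"
  shows "\<exists>u \<kappa>. orthonormal_eigenbasis Q u \<kappa>"
proof -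
  obtain B where B: "span B = UNIV" "pairwise orthogonal B" "\<forall>x\<in>B. norm x = 1 \<and> (\<exists>\<mu>. Q *v x = \<mu> *\<^sub>R x)"
    using symmetric_matrix_invariant_subspace_orthonormal_eigenbasis[OF sym, of UNIV] by auto
  have "0 \<notin> B" using B(3) by force
  hence ind: "independent B" using B(2) by (rule pairwise_orthogonal_independent[rotated])
  have "card B = dim (UNIV :: (real^'n) set)" using ind B(1) by (intro basis_card_eq_dim) auto
  hence "card B = CARD('n)" by simp
  then obtain u where u: "bij_betw u (UNIV::'n set) B"
    using finite_same_card_bij[of "UNIV::'n set" B] independent_bound[OF ind] by auto
  have uB: "u j \<in> B" for j using u by (auto simp: bij_betw_def)
  have orth: "u i \<bullet> u j = (if i = j then 1 else 0)" for i j
  proof -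
    have "i \<noteq> j \<Longrightarrow> u i \<noteq> u j" using u by (auto simp: bij_betw_def inj_on_def)
    thus ?thesis using B(2,3) uB[of i] uB[of j] by (auto simp: pairwise_def orthogonal_def norm_eq_1)
  qed
  have "\<forall>j. \<exists>\<mu>. Q *v u j = \<mu> *\<^sub>R u j" using B(3) uB by blast
  then obtain \<kappa> where \<kappa>: "\<And>j. Q *v u j = \<kappa> j *\<^sub>R u j" by metis
  have "range u = B" using u by (simp add: bij_betw_def)
  hence exp: "x = (\<Sum>j\<in>UNIV. (u j \<bullet> x) *\<^sub>R u j)" for x
    using orthonormal_spanning_expansion[OF orth] B(1) by blast
  have "orthonormal_eigenbasis Q u \<kappa>" by unfold_locales (rule orth, rule \<kappa>, rule exp)
  thus ?thesis by blast
qed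

lemma real_sqrt_prod: "sqrt (prod f A) = (\<Prod>x\<in>A. sqrt (f x))"
  by (induction A rule: infinite_finite_induct) (auto simp: real_sqrt_mult)

context orthonormal_eigenbasis
begin

lemma inner_eq_sum_coordinates: "x \<bullet> y = (\<Sum>j\<in>UNIV. (u j \<bullet> x) * (u j \<bullet> y))"
  by (subst (1 2) expansion) (rule inner_sum_scaleR_orthonormal[OF orthonormal])

lemma inner_basis_matrix_vector: "u j \<bullet> (Q *v x) = \<kappa> j * (u j \<bullet> x)"
proof -
  have "Q *v x = (\<Sum>i\<in>UNIV. (\<kappa> i * (u i \<bullet> x)) *\<^sub>R u i)"
    by (subst expansion)
      (simp add: linear_sum[OF matrix_vector_mul_linear] matrix_vector_mult_scaleR eigenvector mult.commute)
  thus ?thesis by (simp add: inner_sum_right orthonormal if_distrib cong: if_cong)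
qed

lemma quadratic_form_eq_sum: "x \<bullet> (Q *v y) = (\<Sum>j\<in>UNIV. \<kappa> j * (u j \<bullet> x) * (u j \<bullet> y))"
  by (simp add: inner_eq_sum_coordinates[of x] inner_basis_matrix_vector mult_ac)

lemma eigenvalue_eq_quadratic_form: "\<kappa> j = u j \<bullet> (Q *v u j)"
  by (simp add: eigenvector orthonormal)

lemma identity_plus_scaleR: "orthonormal_eigenbasis (mat 1 + c *\<^sub>R Q) u (\<lambda>j. 1 + c * \<kappa> j)"
  by unfold_locales
    (simp_all add: orthonormal eigenvector matrix_vector_mult_add_rdistrib
      scaleR_matrix_vector_assoc[symmetric] scaleR_add_left flip: expansion)

lemma plus_scaleR_identity: "orthonormal_eigenbasis (Q + c *\<^sub>R mat 1) u (\<lambda>j. \<kappa> j + c)"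
  by unfold_locales
    (simp_all add: orthonormal eigenvector matrix_vector_mult_add_rdistrib
      scaleR_matrix_vector_assoc[symmetric] scaleR_add_left flip: expansion)

lemma det_eq_prod_eigenvalues: "det Q = (\<Prod>j\<in>UNIV. \<kappa> j)"
proof -
  define U :: "real^'n^'n" where "U = (\<chi> i j. u j $ i)"
  define D :: "real^'n^'n" where "D = (\<chi> i j. if i = j then \<kappa> j else 0)"
  have "transpose U ** U = mat 1"
    by (auto simp: vec_eq_iff matrix_matrix_mult_def transpose_def mat_def U_def
        orthonormal[symmetric] inner_vec_def mult.commute)
  from arg_cong[OF this, of det] have "det U * det U = 1" by (simp add: det_mul det_transpose)
  moreover have "Q ** U = U ** D"
  proof -
    have "(Q ** U) $ i $ j = (U ** D) $ i $ j" for i j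
    proof -
      have "(Q ** U) $ i $ j = (Q *v u j) $ i"
        by (simp add: matrix_matrix_mult_def matrix_vector_mult_def U_def)
      also have "\<dots> = (U ** D) $ i $ j"
        by (simp add: eigenvector matrix_matrix_mult_def D_def U_def if_distrib cong: if_cong)
      finally show ?thesis .
    qed
    thus ?thesis by (simp add: vec_eq_iff)
  qed
  from arg_cong[OF this, of det] have "det Q * det U = det U * det D" by (simp add: det_mul)
  ultimately have "det Q = det D" by (metis mult_cancel_left mult_eq_0_iff zero_neq_one mult.commute)
  also have "det D = (\<Prod>j\<in>UNIV. \<kappa> j)" by (subst det_diagonal) (auto simp: D_def)
  finally show ?thesis .
qed

lemma resolvent_quadratic_form_le:
  assumes \<kappa>: "\<And>j. 0 \<le> \<kappa> j" and c: "0 < c" and a: "(Q + c *\<^sub>R mat 1) *v a = e"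
  shows "a \<bullet> (Q *v a) \<le> (\<Sum>j\<in>UNIV. \<kappa> j / (\<kappa> j + c) * (u j \<bullet> e)\<^sup>2) / c"
proof -
  have pos: "0 < \<kappa> j + c" for j using \<kappa>[of j] c by linarith
  have coord: "u j \<bullet> a = (u j \<bullet> e) / (\<kappa> j + c)" for j
    using orthonormal_eigenbasis.inner_basis_matrix_vector[OF plus_scaleR_identity[of c], where j = j and x = a]
      a pos[of j]
    by (simp add: field_simps)
  have "a \<bullet> (Q *v a) = (\<Sum>j\<in>UNIV. \<kappa> j / (\<kappa> j + c) * (u j \<bullet> e)\<^sup>2 / (\<kappa> j + c))"
    by (simp add: quadratic_form_eq_sum coord power2_eq_square mult_ac)
  also have "\<dots> \<le> (\<Sum>j\<in>UNIV. \<kappa> j / (\<kappa> j + c) * (u j \<bullet> e)\<^sup>2 / c)"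
    using \<kappa> pos c by (intro sum_mono divide_left_mono) auto
  finally show ?thesis by (simp add: sum_divide_distrib)
qed

lemma ln_prod_inverse_sqrt_resolvent:
  assumes \<kappa>: "\<And>j. 0 \<le> \<kappa> j" and c: "0 < c"
  shows "ln (\<Prod>j\<in>UNIV. 1 / sqrt (1 - \<kappa> j / (\<kappa> j + c))) = ln (det (mat 1 + (1 / c) *\<^sub>R Q)) / 2"
proof -
  have "1 / (1 - \<kappa> j / (\<kappa> j + c)) = 1 + 1 / c * \<kappa> j" for j
    using \<kappa>[of j] c by (simp add: field_simps)
  hence "1 / sqrt (1 - \<kappa> j / (\<kappa> j + c)) = sqrt (1 + 1 / c * \<kappa> j)" for j
    by (metis real_sqrt_divide real_sqrt_one)
  moreover have "0 \<le> (\<Prod>j\<in>UNIV. 1 + 1 / c * \<kappa> j)" using \<kappa> c by (intro prod_nonneg) simp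
  ultimately show ?thesis
    by (simp add: orthonormal_eigenbasis.det_eq_prod_eigenvalues[OF identity_plus_scaleR]
        ln_sqrt flip: real_sqrt_prod)
qed

end

section \<open>Positive definite kernels and RKHS bounds\<close>

lemma pd_kernel_sym: "pd_kernel k \<Longrightarrow> k x y = k y x"
  by (simp add: pd_kernel_def)

lemma pd_kernel_sum_nonneg:
  assumes pd: "pd_kernel k" and fin: "finite I"
  shows "0 \<le> (\<Sum>i\<in>I. \<Sum>j\<in>I. c i * c j * k (x i) (x j))"
proof -
  obtain h where h: "bij_betw h {..<card I} I"
    using ex_bij_betw_nat_finite[OF fin] by (auto simp: atLeast0LessThan)
  have reindex: "sum F I = (\<Sum>i<card I. F (h i))" for F :: "_ \<Rightarrow> real"
    by (rule sum.reindex_bij_betw[OF h, symmetric])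
  show ?thesis
    using pd unfolding pd_kernel_def reindex
    by (auto elim!: allE[of _ "card I"] allE[of _ "x \<circ> h"] allE[of _ "c \<circ> h"])
qed

lemma pd_kernel_cauchy_schwarz:
  assumes pd: "pd_kernel k" and fin: "finite I"
  shows "(\<Sum>i\<in>I. \<Sum>j\<in>I. c i * d j * k (x i) (x j))\<^sup>2
    \<le> (\<Sum>i\<in>I. \<Sum>j\<in>I. c i * c j * k (x i) (x j)) * (\<Sum>i\<in>I. \<Sum>j\<in>I. d i * d j * k (x i) (x j))"
proof (rule quadratic_nonneg_imp_discriminant_le)
  fix s :: real
  have "0 \<le> (\<Sum>i\<in>I. \<Sum>j\<in>I. (c i + s * d i) * (c j + s * d j) * k (x i) (x j))"
    by (rule pd_kernel_sum_nonneg[OF pd fin])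
  also have "\<dots> = (\<Sum>i\<in>I. \<Sum>j\<in>I. c i * c j * k (x i) (x j))
      + s * (\<Sum>i\<in>I. \<Sum>j\<in>I. c i * d j * k (x i) (x j))
      + s * (\<Sum>i\<in>I. \<Sum>j\<in>I. d i * c j * k (x i) (x j))
      + s\<^sup>2 * (\<Sum>i\<in>I. \<Sum>j\<in>I. d i * d j * k (x i) (x j))"
    by (simp add: sum.distrib sum_distrib_left algebra_simps power2_eq_square)
  also have "(\<Sum>i\<in>I. \<Sum>j\<in>I. d i * c j * k (x i) (x j)) = (\<Sum>i\<in>I. \<Sum>j\<in>I. c i * d j * k (x i) (x j))"
    by (subst sum.swap) (simp add: pd_kernel_sym[OF pd] mult_ac)
  finally show "0 \<le> (\<Sum>i\<in>I. \<Sum>j\<in>I. c i * c j * k (x i) (x j))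
      + 2 * s * (\<Sum>i\<in>I. \<Sum>j\<in>I. c i * d j * k (x i) (x j))
      + s\<^sup>2 * (\<Sum>i\<in>I. \<Sum>j\<in>I. d i * d j * k (x i) (x j))"
    by (simp add: algebra_simps)
qed (auto intro: pd_kernel_sum_nonneg[OF pd fin])

lemma pd_kernel_diag_nonneg: "pd_kernel k \<Longrightarrow> 0 \<le> k z z"
  using pd_kernel_sum_nonneg[where I = "{()}" and c = "\<lambda>_. 1" and x = "\<lambda>_. z"] by simp

lemma pd_kernel_abs_le_1:
  assumes pd: "pd_kernel k" and diag: "\<And>z. k z z \<le> 1"
  shows "\<bar>k a b\<bar> \<le> 1"
proof -
  define x where "x = (\<lambda>t::bool. if t then a else b)"
  define c where "c = (\<lambda>t::bool. if t then 1 else (0::real))"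
  have "(\<Sum>i\<in>UNIV. \<Sum>j\<in>UNIV. c i * c (\<not> j) * k (x i) (x j))\<^sup>2
    \<le> (\<Sum>i\<in>UNIV. \<Sum>j\<in>UNIV. c i * c j * k (x i) (x j)) * (\<Sum>i\<in>UNIV. \<Sum>j\<in>UNIV. c (\<not> i) * c (\<not> j) * k (x i) (x j))"
    by (rule pd_kernel_cauchy_schwarz[OF pd]) simp
  hence "(k a b)\<^sup>2 \<le> k a a * k b b" by (simp add: UNIV_bool x_def c_def)
  also have "\<dots> \<le> 1 * 1" using diag pd_kernel_diag_nonneg[OF pd] by (intro mult_mono) auto
  finally show ?thesis by (simp add: abs_square_le_1)
qed

lemma rkhs_bound_mono:
  assumes pd: "pd_kernel k" and f: "rkhs_bound k f C" and CD: "C \<le> D"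
  shows "rkhs_bound k f D"
  unfolding rkhs_bound_def
proof (intro allI)
  fix n :: nat and xs c
  have "0 \<le> (\<Sum>i<n. \<Sum>j<n. c i * c j * k (xs i) (xs j))"
    by (rule pd_kernel_sum_nonneg[OF pd finite_lessThan])
  with f CD show "(\<Sum>i<n. c i * f (xs i))\<^sup>2 \<le> D * (\<Sum>i<n. \<Sum>j<n. c i * c j * k (xs i) (xs j))"
    unfolding rkhs_bound_def by (meson order_trans mult_right_mono)
qed

lemma rkhs_norm_le:
  assumes "rkhs_bound k f C" "0 \<le> C"
  shows "rkhs_norm k f \<le> sqrt C"
proof -
  have "Inf {C. 0 \<le> C \<and> rkhs_bound k f C} \<le> C"
    using assms by (intro cInf_lower) (auto intro: bdd_belowI[of _ 0])
  thus ?thesis unfolding rkhs_norm_def by simp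
qed

text \<open>The admissible constants are closed under infima.\<close>
lemma rkhs_bound_rkhs_norm:
  assumes pd: "pd_kernel k" and f: "in_rkhs k f"
  shows "rkhs_bound k f ((rkhs_norm k f)\<^sup>2)" and "0 \<le> rkhs_norm k f"
proof -
  define S where "S = {C. 0 \<le> C \<and> rkhs_bound k f C}"
  obtain C where "rkhs_bound k f C" using f by (auto simp: in_rkhs_def)
  hence "max C 0 \<in> S" using rkhs_bound_mono[OF pd] by (auto simp: S_def)
  hence neS: "S \<noteq> {}" by auto
  have Inf_nonneg: "0 \<le> Inf S" using neS by (intro cInf_greatest) (auto simp: S_def)
  have "rkhs_bound k f (Inf S)" unfolding rkhs_bound_def
  proof (intro allI)
    fix n :: nat and xs c
    define a where "a = (\<Sum>i<n. c i * f (xs i))\<^sup>2"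
    define q where "q = (\<Sum>i<n. \<Sum>j<n. c i * c j * k (xs i) (xs j))"
    have aC: "a \<le> C' * q" if "C' \<in> S" for C' using that by (auto simp: S_def rkhs_bound_def a_def q_def)
    have "a \<le> Inf S * q"
    proof (cases "q = 0")
      case True
      thus ?thesis using aC neS by fastforce
    next
      case False
      moreover have "0 \<le> q" unfolding q_def by (rule pd_kernel_sum_nonneg[OF pd finite_lessThan])
      ultimately have q: "q > 0" by simp
      have "a / q \<le> Inf S" using neS by (intro cInf_greatest) (auto simp: pos_divide_le_eq[OF q] aC)
      thus ?thesis using q by (simp add: pos_divide_le_eq)
    qed
    thus "(\<Sum>i<n. c i * f (xs i))\<^sup>2 \<le> Inf S * (\<Sum>i<n. \<Sum>j<n. c i * c j * k (xs i) (xs j))"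
      by (simp add: a_def q_def)
  qed
  thus "rkhs_bound k f ((rkhs_norm k f)\<^sup>2)" and "0 \<le> rkhs_norm k f"
    using Inf_nonneg by (simp_all add: rkhs_norm_def S_def)
qed

lemma rkhs_bound_add:
  assumes pd: "pd_kernel k" and f: "rkhs_bound k f C" and g: "rkhs_bound k g D"
    and C: "0 \<le> C" and D: "0 \<le> D"
  shows "rkhs_bound k (\<lambda>x. f x + g x) ((sqrt C + sqrt D)\<^sup>2)"
  unfolding rkhs_bound_def
proof (intro allI)
  fix n :: nat and xs c
  define a where "a = (\<Sum>i<n. c i * f (xs i))"
  define b where "b = (\<Sum>i<n. c i * g (xs i))"
  define q where "q = (\<Sum>i<n. \<Sum>j<n. c i * c j * k (xs i) (xs j))"
  have q: "0 \<le> q" unfolding q_def by (rule pd_kernel_sum_nonneg[OF pd finite_lessThan])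
  have "a\<^sup>2 \<le> C * q" "b\<^sup>2 \<le> D * q"
    using f g by (simp_all add: rkhs_bound_def a_def b_def q_def)
  hence "sqrt (a\<^sup>2) \<le> sqrt (C * q)" "sqrt (b\<^sup>2) \<le> sqrt (D * q)"
    by (simp_all only: real_sqrt_le_mono)
  hence "\<bar>a\<bar> + \<bar>b\<bar> \<le> (sqrt C + sqrt D) * sqrt q" by (simp add: real_sqrt_mult algebra_simps)
  hence "\<bar>a + b\<bar> \<le> (sqrt C + sqrt D) * sqrt q" by (rule order_trans[OF abs_triangle_ineq])
  hence "\<bar>a + b\<bar>\<^sup>2 \<le> ((sqrt C + sqrt D) * sqrt q)\<^sup>2" by (rule power_mono) simp
  hence "(a + b)\<^sup>2 \<le> (sqrt C + sqrt D)\<^sup>2 * q" using q by (simp add: power_mult_distrib)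
  thus "(\<Sum>i<n. c i * (f (xs i) + g (xs i)))\<^sup>2 \<le> (sqrt C + sqrt D)\<^sup>2 * (\<Sum>i<n. \<Sum>j<n. c i * c j * k (xs i) (xs j))"
    by (simp add: a_def b_def q_def algebra_simps sum.distrib)
qed

lemma gram_quadratic_form:
  "x \<bullet> (gram k zs *v y) = (\<Sum>i\<in>UNIV. \<Sum>j\<in>UNIV. x$i * y$j * k (zs i) (zs j))"
  by (simp add: gram_def matrix_vector_mult_def inner_vec_def sum_distrib_left mult_ac)

lemma gram_psd: "pd_kernel k \<Longrightarrow> 0 \<le> x \<bullet> (gram k zs *v x)"
  unfolding gram_quadratic_form by (rule pd_kernel_sum_nonneg) simp_all

lemma transpose_gram: "pd_kernel k \<Longrightarrow> transpose (gram k zs) = gram k zs"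
  by (simp add: gram_def transpose_def pd_kernel_sym vec_eq_iff)

lemma gram_plus_scaleR_identity_inverse:
  fixes zs :: "'n::finite \<Rightarrow> 'z"
  assumes pd: "pd_kernel k" and c: "c > 0"
  shows "(gram k zs + c *\<^sub>R mat 1) *v (matrix_inv (gram k zs + c *\<^sub>R mat 1) *v v) = v"
proof -
  define G where "G = gram k zs + c *\<^sub>R mat 1"
  have "x = 0" if "G *v x = 0" for x
  proof -
    have "x \<bullet> (gram k zs *v x) + c * (x \<bullet> x) = x \<bullet> (G *v x)"
      by (simp add: G_def matrix_vector_mult_add_rdistrib inner_add_right
          scaleR_matrix_vector_assoc[symmetric])
    also have "\<dots> = 0" using that by simp
    finally have "x \<bullet> (gram k zs *v x) + c * (x \<bullet> x) = 0" .
    with gram_psd[OF pd, of x zs] c show ?thesis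
      by (metis add_nonneg_pos inner_eq_zero_iff inner_gt_zero_iff less_irrefl mult_pos_pos)
  qed
  hence "invertible G" by (simp add: invertible_left_inverse matrix_left_invertible_ker)
  hence "G ** matrix_inv G = mat 1"
    unfolding invertible_def matrix_inv_def by (rule someI2_ex) simp
  thus ?thesis by (simp add: G_def matrix_vector_mul_assoc)
qed

lemma rkhs_bound_finite_family:
  fixes zs :: "'n::finite \<Rightarrow> 'z" and c :: "real^'n"
  assumes "rkhs_bound k f C"
  shows "(\<Sum>i\<in>UNIV. c$i * f (zs i))\<^sup>2 \<le> C * (c \<bullet> (gram k zs *v c))"
proof -
  obtain h where h: "bij_betw h {..<CARD('n)} (UNIV::'n set)"
    using ex_bij_betw_nat_finite[of "UNIV::'n set"] by (auto simp: atLeast0LessThan)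
  have reindex: "sum F UNIV = (\<Sum>i<CARD('n). F (h i))" for F :: "'n \<Rightarrow> real"
    by (rule sum.reindex_bij_betw[OF h, symmetric])
  show ?thesis
    using assms unfolding rkhs_bound_def gram_quadratic_form reindex
    by (auto elim!: allE[of _ "CARD('n)"] allE[of _ "zs \<circ> h"] allE[of _ "\<lambda>i. c$(h i)"])
qed

text \<open>Cauchy-Schwarz for the kernel on the disjoint union of the test points and the centres.\<close>
lemma rkhs_bound_kernel_expansion:
  fixes zs :: "'n::finite \<Rightarrow> 'z" and \<alpha> :: "real^'n"
  assumes pd: "pd_kernel k"
  shows "rkhs_bound k (\<lambda>x. \<Sum>i\<in>UNIV. k x (zs i) * \<alpha>$i) (\<alpha> \<bullet> (gram k zs *v \<alpha>))"
  unfolding rkhs_bound_def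
proof (intro allI)
  fix n :: nat and xs :: "nat \<Rightarrow> 'z" and c :: "nat \<Rightarrow> real"
  define I where "I = {..<n} <+> (UNIV::'n set)"
  define X where "X = case_sum xs zs"
  define c' :: "nat + 'n \<Rightarrow> real" where "c' = case_sum c (\<lambda>_. 0)"
  define d' :: "nat + 'n \<Rightarrow> real" where "d' = case_sum (\<lambda>_. 0) (\<lambda>i. \<alpha>$i)"
  have "(\<Sum>i\<in>I. \<Sum>j\<in>I. c' i * d' j * k (X i) (X j))\<^sup>2
    \<le> (\<Sum>i\<in>I. \<Sum>j\<in>I. c' i * c' j * k (X i) (X j)) * (\<Sum>i\<in>I. \<Sum>j\<in>I. d' i * d' j * k (X i) (X j))"
    by (rule pd_kernel_cauchy_schwarz[OF pd]) (simp add: I_def)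
  thus "(\<Sum>m<n. c m * (\<Sum>i\<in>UNIV. k (xs m) (zs i) * \<alpha>$i))\<^sup>2
    \<le> \<alpha> \<bullet> (gram k zs *v \<alpha>) * (\<Sum>i<n. \<Sum>j<n. c i * c j * k (xs i) (xs j))"
    by (simp add: I_def sum.Plus X_def c'_def d'_def sum_distrib_left gram_quadratic_form mult_ac)
qed

lemma gram_eigenvalue_nonneg:
  assumes "pd_kernel k" "orthonormal_eigenbasis (gram k zs) u \<kappa>"
  shows "0 \<le> \<kappa> j"
  using gram_psd[OF assms(1)] orthonormal_eigenbasis.eigenvalue_eq_quadratic_form[OF assms(2)] by metis

lemma gram_eigenvalue_le:
  fixes zs :: "'n::finite \<Rightarrow> 'z"
  assumes pd: "pd_kernel k" and diag: "\<And>z. k z z \<le> 1"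
    and eb: "orthonormal_eigenbasis (gram k zs) u \<kappa>"
  shows "\<kappa> j \<le> (real CARD('n))\<^sup>2"
proof -
  have "\<bar>u j $ i\<bar> \<le> 1" for i
    using component_le_norm_cart[of "u j" i] orthonormal_eigenbasis.orthonormal[OF eb, of j j]
    by (simp add: norm_eq_sqrt_inner)
  hence "\<bar>u j $ i * u j $ i' * k (zs i) (zs i')\<bar> \<le> 1" for i i'
    using pd_kernel_abs_le_1[OF pd diag] unfolding abs_mult by (meson mult_le_one abs_ge_zero)
  hence "(\<Sum>i\<in>UNIV. \<Sum>i'\<in>UNIV. u j $ i * u j $ i' * k (zs i) (zs i')) \<le> (\<Sum>i\<in>(UNIV::'n set). \<Sum>i'\<in>(UNIV::'n set). 1)"
    by (intro sum_mono) (simp add: abs_le_iff)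
  thus ?thesis
    by (simp add: orthonormal_eigenbasis.eigenvalue_eq_quadratic_form[OF eb] gram_quadratic_form power2_eq_square)
qed

lemma ln_det_gram_le:
  fixes zs :: "'n::finite \<Rightarrow> 'z"
  assumes pd: "pd_kernel k" and diag: "\<And>z. k z z \<le> 1" and c: "0 \<le> c"
  shows "ln (det (mat 1 + c *\<^sub>R gram k zs)) \<le> c * (real CARD('n))^3"
proof -
  obtain u \<kappa> where eb: "orthonormal_eigenbasis (gram k zs) u \<kappa>"
    using symmetric_matrix_has_orthonormal_eigenbasis[OF transpose_gram[OF pd]] by blast
  have \<kappa>: "0 \<le> \<kappa> j" "\<kappa> j \<le> (real CARD('n))\<^sup>2" for j
    using gram_eigenvalue_nonneg[OF pd eb] gram_eigenvalue_le[OF pd diag eb] by auto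
  have "ln (det (mat 1 + c *\<^sub>R gram k zs)) = (\<Sum>j\<in>UNIV. ln (1 + c * \<kappa> j))"
    using \<kappa>(1) c by (simp add: orthonormal_eigenbasis.det_eq_prod_eigenvalues[OF
        orthonormal_eigenbasis.identity_plus_scaleR[OF eb]] ln_prod add_nonneg_eq_0_iff)
  also have "\<dots> \<le> (\<Sum>j\<in>(UNIV::'n set). c * (real CARD('n))\<^sup>2)"
    using \<kappa> c by (intro sum_mono order_trans[OF ln_add_one_self_le_self] mult_left_mono) auto
  also have "\<dots> = c * (real CARD('n))^3" by (simp add: power2_eq_square power3_eq_cube)
  finally show ?thesis .
qed

lemma ln_det_gram_le_max_info_gain:
  fixes zs :: "'n::finite \<Rightarrow> 'z"
  assumes pd: "pd_kernel k" and diag: "\<And>z. k z z \<le> 1"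
  shows "ln (det (mat 1 + (1 / lam\<^sup>2) *\<^sub>R gram k zs)) / 2 \<le> max_info_gain k lam TYPE('n)"
  unfolding max_info_gain_def
proof (rule cSUP_upper)
  show "bdd_above ((\<lambda>zs. ln (det (mat 1 + (1 / lam\<^sup>2) *\<^sub>R gram k zs)) / 2) ` (UNIV :: ('n \<Rightarrow> 'z) set))"
    using ln_det_gram_le[OF pd diag, of "1 / lam\<^sup>2"]
    by (intro bdd_aboveI2[where M = "(real CARD('n))^3 / lam\<^sup>2 / 2"]) (simp add: divide_right_mono)
qed simp

section \<open>The kernel ridge predictor\<close>

lemma krr_pred_add:
  fixes zs :: "'n::finite \<Rightarrow> 'z"
  shows "krr_pred k lam zs (Y + Y') = (\<lambda>x. krr_pred k lam zs Y x + krr_pred k lam zs Y' x)"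
  by (simp add: krr_pred_def fun_eq_iff matrix_vector_right_distrib distrib_left sum.distrib)

lemma rkhs_bound_krr_pred:
  fixes zs :: "'n::finite \<Rightarrow> 'z" and Y :: "real^'n" and lam :: real
  assumes "pd_kernel k"
  defines "\<alpha> \<equiv> matrix_inv (gram k zs + lam\<^sup>2 *\<^sub>R mat 1) *v Y"
  shows "rkhs_bound k (krr_pred k lam zs Y) (\<alpha> \<bullet> (gram k zs *v \<alpha>))"
  unfolding krr_pred_def \<alpha>_def by (rule rkhs_bound_kernel_expansion[OF assms(1)])

text \<open>With \<open>s = a \<bullet> F = a \<bullet> K a + c |a|\<^sup>2\<close>, the RKHS bound gives \<open>s\<^sup>2 \<le> N (a \<bullet> K a) \<le> N s\<close>.\<close>
lemma ridge_signal_quadratic_form_le: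
  fixes zs :: "'n::finite \<Rightarrow> 'z"
  assumes pd: "pd_kernel k" and f: "rkhs_bound k f N" "0 \<le> N" and c: "0 \<le> c"
    and a: "(gram k zs + c *\<^sub>R mat 1) *v a = (\<chi> i. f (zs i))"
  shows "a \<bullet> (gram k zs *v a) \<le> N"
proof -
  define p where "p = a \<bullet> (gram k zs *v a)"
  define s where "s = (\<Sum>i\<in>UNIV. a$i * f (zs i))"
  have "s = a \<bullet> ((gram k zs + c *\<^sub>R mat 1) *v a)"
    by (simp add: a s_def inner_vec_def)
  hence p_le_s: "p \<le> s"
    using c by (simp add: p_def matrix_vector_mult_add_rdistrib inner_add_right
        scaleR_matrix_vector_assoc[symmetric])
  have "s\<^sup>2 \<le> N * p" unfolding s_def p_def by (rule rkhs_bound_finite_family[OF f(1)])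
  also have "\<dots> \<le> N * s" using p_le_s f(2) by (rule mult_left_mono)
  finally have "s \<le> N \<or> s \<le> 0" by (simp add: power2_eq_square) (metis mult_le_cancel_right not_le)
  thus ?thesis using p_le_s f(2) unfolding p_def by linarith
qed

theorem rkhs_norm_krr_pred_le:
  fixes zs :: "'n::finite \<Rightarrow> 'z" and e :: "real^'n"
  assumes pd: "pd_kernel k" and f: "in_rkhs k f" and lam: "lam > 0"
    and eb: "orthonormal_eigenbasis (gram k zs) u \<kappa>"
  shows "rkhs_norm k (krr_pred k lam zs (\<chi> i. f (zs i) + e$i))
    \<le> rkhs_norm k f + sqrt ((\<Sum>j\<in>UNIV. \<kappa> j / (\<kappa> j + lam\<^sup>2) * (u j \<bullet> e)\<^sup>2) / lam\<^sup>2)"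
proof -
  have lam2: "0 < lam\<^sup>2" using lam by simp
  define G where "G = gram k zs + lam\<^sup>2 *\<^sub>R mat 1"
  define F where "F = (\<chi> i. f (zs i))"
  define aF where "aF = matrix_inv G *v F"
  define aE where "aE = matrix_inv G *v e"
  define pF where "pF = aF \<bullet> (gram k zs *v aF)"
  define pE where "pE = aE \<bullet> (gram k zs *v aE)"
  have "(\<chi> i. f (zs i) + e$i) = F + e" by (simp add: F_def vec_eq_iff)
  hence split: "krr_pred k lam zs (\<chi> i. f (zs i) + e$i) = (\<lambda>x. krr_pred k lam zs F x + krr_pred k lam zs e x)"
    by (simp add: krr_pred_add)
  have "0 \<le> pF" "0 \<le> pE" unfolding pF_def pE_def by (simp_all add: gram_psd[OF pd])
  moreover have "rkhs_bound k (krr_pred k lam zs F) pF" "rkhs_bound k (krr_pred k lam zs e) pE"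
    unfolding pF_def pE_def aF_def aE_def G_def by (simp_all add: rkhs_bound_krr_pred[OF pd])
  ultimately have "rkhs_norm k (krr_pred k lam zs (\<chi> i. f (zs i) + e$i)) \<le> sqrt ((sqrt pF + sqrt pE)\<^sup>2)"
    unfolding split by (intro rkhs_norm_le rkhs_bound_add[OF pd]) simp_all
  also have "\<dots> = sqrt pF + sqrt pE" using \<open>0 \<le> pF\<close> \<open>0 \<le> pE\<close> by simp
  also have "sqrt pF \<le> rkhs_norm k f"
  proof -
    have "(gram k zs + lam\<^sup>2 *\<^sub>R mat 1) *v aF = (\<chi> i. f (zs i))"
      using gram_plus_scaleR_identity_inverse[OF pd lam2] by (simp add: aF_def G_def F_def)
    hence "pF \<le> (rkhs_norm k f)\<^sup>2" unfolding pF_def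
      by (rule ridge_signal_quadratic_form_le[OF pd rkhs_bound_rkhs_norm(1)[OF pd f], rotated 2]) simp_all
    thus ?thesis using real_sqrt_le_mono rkhs_bound_rkhs_norm(2)[OF pd f] by fastforce
  qed
  also have "pE \<le> (\<Sum>j\<in>UNIV. \<kappa> j / (\<kappa> j + lam\<^sup>2) * (u j \<bullet> e)\<^sup>2) / lam\<^sup>2"
  proof -
    have "(gram k zs + lam\<^sup>2 *\<^sub>R mat 1) *v aE = e"
      using gram_plus_scaleR_identity_inverse[OF pd lam2] by (simp add: aE_def G_def)
    thus ?thesis unfolding pE_def using lam2
      by (intro orthonormal_eigenbasis.resolvent_quadratic_form_le[OF eb gram_eigenvalue_nonneg[OF pd eb]]) simp_all
  qed
  finally show ?thesis by (simp add: real_sqrt_le_mono)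
qed

section \<open>Gaussian decoupling and sub-Gaussian concentration\<close>

abbreviation std_normal :: "real measure" where
  "std_normal \<equiv> density lborel (\<lambda>x. ennreal (std_normal_density x))"

lemma prob_space_std_normal: "prob_space std_normal"
  using prob_space_normal_density[of 1 0] by simp

lemma product_sigma_finite_std_normal: "product_sigma_finite (\<lambda>_. std_normal)"
  by (simp add: product_sigma_finite_def prob_space_imp_sigma_finite prob_space_std_normal)

lemma nn_integral_std_normal_eq:
  assumes "\<And>g. std_normal_density g * h g = C * normal_density m s g" and "0 < s" "0 \<le> C"
    and [measurable]: "h \<in> borel_measurable borel"
  shows "(\<integral>\<^sup>+ g. ennreal (h g) \<partial>std_normal) = ennreal C"
proof -
  have "(\<integral>\<^sup>+ g. ennreal (h g) \<partial>std_normal) = (\<integral>\<^sup>+ g. ennreal (std_normal_density g) * ennreal (h g) \<partial>lborel)"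
    by (rule nn_integral_density) auto
  also have "\<dots> = (\<integral>\<^sup>+ g. ennreal C * ennreal (normal_density m s g) \<partial>lborel)"
    by (intro nn_integral_cong) (simp add: assms(1,3) flip: ennreal_mult')
  also have "\<dots> = ennreal C * (\<integral>\<^sup>+ g. ennreal (normal_density m s g) \<partial>lborel)"
    by (rule nn_integral_cmult) simp
  also have "(\<integral>\<^sup>+ g. ennreal (normal_density m s g) \<partial>lborel) = 1"
    using \<open>0 < s\<close> by (subst nn_integral_eq_integral) (auto intro: integrable_normal_density)
  finally show ?thesis by simp
qed

lemma nn_integral_std_normal_exp_linear:
  "(\<integral>\<^sup>+ g. ennreal (exp (a * g)) \<partial>std_normal) = ennreal (exp (a\<^sup>2 / 2))"
proof (rule nn_integral_std_normal_eq)
  fix g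
  have "- g\<^sup>2 / 2 + a * g = a\<^sup>2 / 2 + - (g - a)\<^sup>2 / 2" by (simp add: power2_eq_square field_simps)
  thus "std_normal_density g * exp (a * g) = exp (a\<^sup>2 / 2) * normal_density a 1 g"
    by (simp add: std_normal_density_def normal_density_def mult_ac flip: exp_add)
qed auto

lemma nn_integral_std_normal_exp_square:
  assumes q: "0 \<le> q" "q < 1"
  shows "(\<integral>\<^sup>+ g. ennreal (exp (q * g\<^sup>2 / 2)) \<partial>std_normal) = ennreal (1 / sqrt (1 - q))"
proof (rule nn_integral_std_normal_eq)
  define s where "s = 1 / sqrt (1 - q)"
  have s: "s > 0" "s\<^sup>2 = 1 / (1 - q)" using q by (simp_all add: s_def power_divide)
  fix g
  have "- g\<^sup>2 / 2 + q * g\<^sup>2 / 2 = - g\<^sup>2 / (2 * s\<^sup>2)" using q by (simp add: s field_simps)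
  thus "std_normal_density g * exp (q * g\<^sup>2 / 2) = s * normal_density 0 s g"
    using s(1) by (simp add: std_normal_density_def normal_density_def real_sqrt_mult mult_ac flip: exp_add)
  show "0 < s" "0 \<le> s" using s(1) by simp_all
qed simp

lemma nn_integral_PiM_std_normal_exp_sum:
  fixes a :: "'n::finite \<Rightarrow> real"
  shows "(\<integral>\<^sup>+g. ennreal (exp (\<Sum>j\<in>UNIV. a j * g j)) \<partial>PiM UNIV (\<lambda>_. std_normal))
    = ennreal (exp (\<Sum>j\<in>UNIV. (a j)\<^sup>2 / 2))"
proof -
  have "(\<integral>\<^sup>+g. ennreal (exp (\<Sum>j\<in>UNIV. a j * g j)) \<partial>PiM UNIV (\<lambda>_. std_normal))
      = (\<integral>\<^sup>+g. (\<Prod>j\<in>UNIV. ennreal (exp (a j * g j))) \<partial>PiM UNIV (\<lambda>_. std_normal))"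
    by (simp add: exp_sum prod_ennreal)
  also have "\<dots> = (\<Prod>j\<in>UNIV. \<integral>\<^sup>+x. ennreal (exp (a j * x)) \<partial>std_normal)"
    by (rule product_sigma_finite.product_nn_integral_prod[OF product_sigma_finite_std_normal]) auto
  also have "\<dots> = ennreal (exp (\<Sum>j\<in>UNIV. (a j)\<^sup>2 / 2))"
    by (simp add: nn_integral_std_normal_exp_linear exp_sum prod_ennreal)
  finally show ?thesis .
qed

lemma nn_integral_PiM_std_normal_exp_square_sum:
  fixes q :: "'n::finite \<Rightarrow> real"
  assumes "\<And>j. 0 \<le> q j" "\<And>j. q j < 1"
  shows "(\<integral>\<^sup>+g. ennreal (exp (\<Sum>j\<in>UNIV. q j * (g j)\<^sup>2 / 2)) \<partial>PiM UNIV (\<lambda>_. std_normal))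
    = ennreal (\<Prod>j\<in>UNIV. 1 / sqrt (1 - q j))"
proof -
  have "(\<integral>\<^sup>+g. ennreal (exp (\<Sum>j\<in>UNIV. q j * (g j)\<^sup>2 / 2)) \<partial>PiM UNIV (\<lambda>_. std_normal))
      = (\<integral>\<^sup>+g. (\<Prod>j\<in>UNIV. ennreal (exp (q j * (g j)\<^sup>2 / 2))) \<partial>PiM UNIV (\<lambda>_. std_normal))"
    by (simp add: exp_sum prod_ennreal)
  also have "\<dots> = (\<Prod>j\<in>UNIV. \<integral>\<^sup>+x. ennreal (exp (q j * x\<^sup>2 / 2)) \<partial>std_normal)"
    by (rule product_sigma_finite.product_nn_integral_prod[OF product_sigma_finite_std_normal]) auto
  also have "\<dots> = ennreal (\<Prod>j\<in>UNIV. 1 / sqrt (1 - q j))"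
    using assms by (simp add: nn_integral_std_normal_exp_square less_imp_le prod_ennreal)
  finally show ?thesis .
qed

lemma add_one_less_exp:
  fixes x :: real
  assumes "x \<noteq> 0"
  shows "1 + x < exp x"
proof (cases "1 + x / 2 < 0")
  case True
  thus ?thesis using exp_gt_zero[of x] by linarith
next
  case False
  have "(1 + x / 2) * (1 + x / 2) \<le> exp (x / 2) * exp (x / 2)"
    using False exp_ge_add_one_self[of "x / 2"] by (intro mult_mono) auto
  hence "1 + x + x\<^sup>2 / 4 \<le> exp x" by (simp add: algebra_simps power2_eq_square flip: exp_add)
  moreover have "x\<^sup>2 / 4 > 0" using assms by simp
  ultimately show ?thesis by linarith
qed

context prob_space
begin

lemma subgaussian_borel_measurable: "subgaussian \<sigma> X \<Longrightarrow> X \<in> borel_measurable M"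
  by (simp add: subgaussian_def)

lemma subgaussian_nn_integral_exp_le:
  assumes "subgaussian \<sigma> X"
  shows "(\<integral>\<^sup>+\<omega>. ennreal (exp (s * X \<omega>)) \<partial>M) \<le> ennreal (exp (s\<^sup>2 * \<sigma>\<^sup>2 / 2))"
  using assms by (auto simp: subgaussian_def nn_integral_eq_integral intro: ennreal_leI)

text \<open>\<open>exp X - 1 - X\<close> is nonnegative with expectation at most 0, so it vanishes almost surely.\<close>
lemma subgaussian_zero_AE_eq_0:
  assumes "subgaussian 0 X"
  shows "AE \<omega> in M. X \<omega> = 0"
proof -
  have [measurable]: "X \<in> borel_measurable M" and intX: "integrable M X" and EX: "expectation X = 0"
    and int_exp: "integrable M (\<lambda>\<omega>. exp (1 * X \<omega>))"
    and E_exp: "expectation (\<lambda>\<omega>. exp (1 * X \<omega>)) \<le> exp (1\<^sup>2 * 0\<^sup>2 / 2)"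
    using assms unfolding subgaussian_def by blast+
  define f where "f \<omega> = exp (X \<omega>) - 1 - X \<omega>" for \<omega>
  have int_f: "integrable M f" unfolding f_def using int_exp intX by auto
  have f_nonneg: "AE \<omega> in M. 0 \<le> f \<omega>" by (simp add: f_def algebra_simps)
  have "expectation f = expectation (\<lambda>\<omega>. exp (X \<omega>)) - 1 - expectation X"
    unfolding f_def using int_exp intX by (simp add: prob_space)
  hence "expectation f = 0" using E_exp EX integral_nonneg_AE[OF f_nonneg] by simp
  hence "AE \<omega> in M. f \<omega> = 0" using integral_nonneg_eq_0_iff_AE[OF int_f f_nonneg] by simp
  thus ?thesis by eventually_elim (use add_one_less_exp in \<open>force simp: f_def\<close>)
qed

lemma indep_subgaussian_nn_integral_exp_sum_le:
  assumes I: "finite I" and ind: "indep_vars (\<lambda>_. borel) \<epsilon> I"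
    and sg: "\<And>i. i \<in> I \<Longrightarrow> subgaussian \<sigma> (\<epsilon> i)"
  shows "(\<integral>\<^sup>+\<omega>. ennreal (exp (\<Sum>i\<in>I. c i * \<epsilon> i \<omega>)) \<partial>M) \<le> ennreal (exp (\<sigma>\<^sup>2 * (\<Sum>i\<in>I. (c i)\<^sup>2) / 2))"
proof -
  have "indep_vars (\<lambda>_. borel) (\<lambda>i \<omega>. ennreal (exp (c i * \<epsilon> i \<omega>))) I"
    by (rule indep_vars_compose2[OF ind]) simp
  hence "(\<integral>\<^sup>+\<omega>. ennreal (exp (\<Sum>i\<in>I. c i * \<epsilon> i \<omega>)) \<partial>M) = (\<Prod>i\<in>I. \<integral>\<^sup>+\<omega>. ennreal (exp (c i * \<epsilon> i \<omega>)) \<partial>M)"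
    using I by (simp add: exp_sum prod_ennreal flip: indep_vars_nn_integral)
  also have "\<dots> \<le> (\<Prod>i\<in>I. ennreal (exp ((c i)\<^sup>2 * \<sigma>\<^sup>2 / 2)))"
    by (intro prod_mono_ennreal subgaussian_nn_integral_exp_le sg)
  also have "\<dots> = ennreal (exp (\<sigma>\<^sup>2 * (\<Sum>i\<in>I. (c i)\<^sup>2) / 2))"
    using I by (simp add: prod_ennreal exp_sum sum_distrib_left sum_divide_distrib mult.commute)
  finally show ?thesis .
qed

lemma indep_subgaussian_nn_integral_exp_orthonormal_le:
  fixes \<epsilon> :: "'n::finite \<Rightarrow> 'a \<Rightarrow> real" and u :: "'n \<Rightarrow> real^'n"
  assumes ind: "indep_vars (\<lambda>_. borel) \<epsilon> UNIV" and sg: "\<And>i. subgaussian \<sigma> (\<epsilon> i)" and \<sigma>: "\<sigma> > 0"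
    and orthonormal: "\<And>i j. u i \<bullet> u j = (if i = j then 1 else 0)" and q: "\<And>j. 0 \<le> q j"
  shows "(\<integral>\<^sup>+\<omega>. ennreal (exp (\<Sum>j\<in>UNIV. sqrt (q j) * (u j \<bullet> (\<chi> i. \<epsilon> i \<omega>)) / \<sigma> * g j)) \<partial>M)
    \<le> ennreal (exp (\<Sum>j\<in>UNIV. q j * (g j)\<^sup>2 / 2))"
proof -
  define w where "w = (\<Sum>j\<in>UNIV. (g j * sqrt (q j) / \<sigma>) *\<^sub>R u j)"
  have "(\<Sum>j\<in>UNIV. sqrt (q j) * (u j \<bullet> (\<chi> i. \<epsilon> i \<omega>)) / \<sigma> * g j) = (\<Sum>i\<in>UNIV. w $ i * \<epsilon> i \<omega>)" for \<omega>
  proof -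
    have "(\<Sum>j\<in>UNIV. sqrt (q j) * (u j \<bullet> (\<chi> i. \<epsilon> i \<omega>)) / \<sigma> * g j) = w \<bullet> (\<chi> i. \<epsilon> i \<omega>)"
      by (simp add: w_def inner_sum_left mult_ac)
    thus ?thesis by (simp add: inner_vec_def)
  qed
  moreover have "\<sigma>\<^sup>2 * (\<Sum>i\<in>UNIV. (w $ i)\<^sup>2) / 2 = (\<Sum>j\<in>UNIV. q j * (g j)\<^sup>2 / 2)"
  proof -
    have "(\<Sum>i\<in>UNIV. (w $ i)\<^sup>2) = w \<bullet> w" by (simp add: inner_vec_def power2_eq_square)
    also have "\<dots> = (\<Sum>j\<in>UNIV. (g j * sqrt (q j) / \<sigma>)\<^sup>2)"
      by (simp add: w_def inner_sum_scaleR_orthonormal[OF orthonormal] power2_eq_square)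
    also have "\<dots> = (\<Sum>j\<in>UNIV. q j * (g j)\<^sup>2 / \<sigma>\<^sup>2)"
      using q by (simp add: power_divide power_mult_distrib mult.commute)
    finally show ?thesis using \<sigma> by (simp add: sum_distrib_left sum_divide_distrib)
  qed
  ultimately show ?thesis
    using indep_subgaussian_nn_integral_exp_sum_le[OF finite_class.finite_UNIV ind sg, of "\<lambda>i. w $ i"] by simp
qed

lemma subgaussian_quadratic_form_nn_integral_exp_le:
  fixes \<epsilon> :: "'n::finite \<Rightarrow> 'a \<Rightarrow> real" and u :: "'n \<Rightarrow> real^'n"
  assumes ind: "indep_vars (\<lambda>_. borel) \<epsilon> UNIV" and sg: "\<And>i. subgaussian \<sigma> (\<epsilon> i)" and \<sigma>: "\<sigma> > 0"
    and orthonormal: "\<And>i j. u i \<bullet> u j = (if i = j then 1 else 0)"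
    and q: "\<And>j. 0 \<le> q j" "\<And>j. q j < 1"
  shows "(\<integral>\<^sup>+\<omega>. ennreal (exp ((\<Sum>j\<in>UNIV. q j * (u j \<bullet> (\<chi> i. \<epsilon> i \<omega>))\<^sup>2) / (2 * \<sigma>\<^sup>2))) \<partial>M)
     \<le> ennreal (\<Prod>j\<in>UNIV. 1 / sqrt (1 - q j))"
proof -
  note [measurable] = subgaussian_borel_measurable[OF sg]
  define PN where "PN = PiM (UNIV::'n set) (\<lambda>_. std_normal)"
  interpret PN: product_prob_space "\<lambda>_::'n. std_normal" UNIV
    by (simp add: product_prob_space_def product_sigma_finite_std_normal product_prob_space_axioms_def
        prob_space_std_normal)
  interpret pair_sigma_finite M PN
    unfolding PN_def by (intro pair_sigma_finite.intro prob_space_imp_sigma_finite PN.P.prob_space_axioms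
        prob_space_axioms)
  define a where "a \<omega> j = sqrt (q j) * (u j \<bullet> (\<chi> i. \<epsilon> i \<omega>)) / \<sigma>" for \<omega> j
  have [measurable]: "(\<lambda>(\<omega>, g). ennreal (exp (\<Sum>j\<in>UNIV. a \<omega> j * g j))) \<in> borel_measurable (M \<Otimes>\<^sub>M PN)"
    unfolding a_def inner_vec_def vec_lambda_beta PN_def by measurable
  have "(\<Sum>j\<in>UNIV. q j * (u j \<bullet> (\<chi> i. \<epsilon> i \<omega>))\<^sup>2) / (2 * \<sigma>\<^sup>2) = (\<Sum>j\<in>UNIV. (a \<omega> j)\<^sup>2 / 2)" for \<omega>
    unfolding sum_divide_distrib
    by (intro sum.cong refl) (use \<sigma> q in \<open>simp add: a_def power_divide power_mult_distrib field_simps\<close>)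
  hence "(\<integral>\<^sup>+\<omega>. ennreal (exp ((\<Sum>j\<in>UNIV. q j * (u j \<bullet> (\<chi> i. \<epsilon> i \<omega>))\<^sup>2) / (2 * \<sigma>\<^sup>2))) \<partial>M)
      = (\<integral>\<^sup>+\<omega>. (\<integral>\<^sup>+g. ennreal (exp (\<Sum>j\<in>UNIV. a \<omega> j * g j)) \<partial>PN) \<partial>M)"
    by (simp add: PN_def nn_integral_PiM_std_normal_exp_sum)
  also have "\<dots> = (\<integral>\<^sup>+g. (\<integral>\<^sup>+\<omega>. ennreal (exp (\<Sum>j\<in>UNIV. a \<omega> j * g j)) \<partial>M) \<partial>PN)"
    by (rule Fubini'[where f = "\<lambda>\<omega> g. ennreal (exp (\<Sum>j\<in>UNIV. a \<omega> j * g j))", symmetric]) measurable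
  also have "\<dots> \<le> (\<integral>\<^sup>+g. ennreal (exp (\<Sum>j\<in>UNIV. q j * (g j)\<^sup>2 / 2)) \<partial>PN)"
    unfolding a_def
    by (intro nn_integral_mono indep_subgaussian_nn_integral_exp_orthonormal_le[OF ind sg \<sigma> orthonormal q(1)])
  also have "\<dots> = ennreal (\<Prod>j\<in>UNIV. 1 / sqrt (1 - q j))"
    unfolding PN_def by (rule nn_integral_PiM_std_normal_exp_square_sum[OF q])
  finally show ?thesis .
qed

lemma Chernoff_prob_le:
  assumes [measurable]: "Q \<in> borel_measurable M" and s: "0 < s" and \<delta>: "0 < \<delta>"
    and mgf: "(\<integral>\<^sup>+\<omega>. ennreal (exp (s * Q \<omega>)) \<partial>M) \<le> ennreal (\<delta> * exp (s * t))"
  shows "prob {\<omega> \<in> space M. t \<le> Q \<omega>} \<le> \<delta>"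
proof -
  have "emeasure M {\<omega> \<in> space M. t \<le> Q \<omega>}
      \<le> ennreal (exp (- s * t)) * (\<integral>\<^sup>+\<omega>. ennreal (exp (s * Q \<omega>)) * indicator (space M) \<omega> \<partial>M)"
    by (rule Chernoff_ineq_nn_integral_ge[OF s sets.top]) measurable
  also have "(\<integral>\<^sup>+\<omega>. ennreal (exp (s * Q \<omega>)) * indicator (space M) \<omega> \<partial>M) = (\<integral>\<^sup>+\<omega>. ennreal (exp (s * Q \<omega>)) \<partial>M)"
    by (intro nn_integral_cong) simp
  also have "ennreal (exp (- s * t)) * \<dots> \<le> ennreal (exp (- s * t)) * ennreal (\<delta> * exp (s * t))"
    by (rule mult_left_mono[OF mgf]) simp
  also have "\<dots> = ennreal \<delta>" using \<delta> by (simp add: exp_minus field_simps flip: ennreal_mult)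
  finally show ?thesis using \<delta> by (simp add: emeasure_eq_measure)
qed

lemma subgaussian_quadratic_form_concentration:
  fixes \<epsilon> :: "'n::finite \<Rightarrow> 'a \<Rightarrow> real" and u :: "'n \<Rightarrow> real^'n"
  assumes ind: "indep_vars (\<lambda>_. borel) \<epsilon> UNIV" and sg: "\<And>i. subgaussian \<sigma> (\<epsilon> i)" and \<sigma>: "0 \<le> \<sigma>"
    and orthonormal: "\<And>i j. u i \<bullet> u j = (if i = j then 1 else 0)"
    and q: "\<And>j. 0 \<le> q j" "\<And>j. q j < 1" and \<delta>: "0 < \<delta>"
  shows "\<exists>A\<in>events. 1 - \<delta> \<le> prob A \<and> (\<forall>\<omega>\<in>A. (\<Sum>j\<in>UNIV. q j * (u j \<bullet> (\<chi> i. \<epsilon> i \<omega>))\<^sup>2)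
      \<le> 2 * \<sigma>\<^sup>2 * (ln (\<Prod>j\<in>UNIV. 1 / sqrt (1 - q j)) + ln (1 / \<delta>)))"
proof (cases "\<sigma> = 0")
  case True
  note [measurable] = subgaussian_borel_measurable[OF sg]
  define A where "A = {\<omega> \<in> space M. \<forall>i. \<epsilon> i \<omega> = 0}"
  have "AE \<omega> in M. \<forall>i\<in>UNIV. \<epsilon> i \<omega> = 0"
    using sg subgaussian_zero_AE_eq_0 True by (intro AE_finite_allI) auto
  hence "prob A = 1" by (simp add: A_def prob_Collect_eq_1)
  moreover have "A \<in> events" unfolding A_def by measurable
  ultimately show ?thesis using \<delta> True by (intro bexI[of _ A]) (auto simp: A_def inner_vec_def)
next
  case False
  hence \<sigma>: "0 < \<sigma>" using \<sigma> by simp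
  note [measurable] = subgaussian_borel_measurable[OF sg]
  define Q where "Q \<omega> = (\<Sum>j\<in>UNIV. q j * (u j \<bullet> (\<chi> i. \<epsilon> i \<omega>))\<^sup>2)" for \<omega>
  define P where "P = (\<Prod>j\<in>UNIV. 1 / sqrt (1 - q j))"
  define t where "t = 2 * \<sigma>\<^sup>2 * (ln P + ln (1 / \<delta>))"
  have [measurable]: "Q \<in> borel_measurable M"
    unfolding Q_def[abs_def] inner_vec_def vec_lambda_beta by measurable
  define s where "s = 1 / (2 * \<sigma>\<^sup>2)"
  have "(\<integral>\<^sup>+\<omega>. ennreal (exp (s * Q \<omega>)) \<partial>M) \<le> ennreal P"
    using subgaussian_quadratic_form_nn_integral_exp_le[OF ind sg \<sigma> orthonormal q]
    by (simp add: s_def Q_def P_def)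
  also have "P = \<delta> * exp (s * t)"
    using \<sigma> \<delta> q by (simp add: s_def P_def t_def exp_add prod_pos)
  finally have "(\<integral>\<^sup>+\<omega>. ennreal (exp (s * Q \<omega>)) \<partial>M) \<le> ennreal (\<delta> * exp (s * t))" .
  with \<sigma> \<delta> have "prob {\<omega> \<in> space M. t \<le> Q \<omega>} \<le> \<delta>"
    by (intro Chernoff_prob_le[where s = s]) (simp_all add: s_def)
  moreover have "{\<omega> \<in> space M. Q \<omega> < t} = space M - {\<omega> \<in> space M. t \<le> Q \<omega>}" by auto
  ultimately have "1 - \<delta> \<le> prob {\<omega> \<in> space M. Q \<omega> < t}" by (simp add: prob_compl)
  moreover have "{\<omega> \<in> space M. Q \<omega> < t} \<in> events" by measurable
  moreover have "\<forall>\<omega>\<in>{\<omega> \<in> space M. Q \<omega> < t}. Q \<omega> \<le> t" by auto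
  ultimately show ?thesis unfolding Q_def P_def t_def by blast
qed

end

lemma sqrt_divide_square_le:
  fixes x y z lam \<sigma> :: real
  assumes "x \<le> 2 * \<sigma>\<^sup>2 * y" "y \<le> z" "0 < lam" "0 \<le> \<sigma>"
  shows "sqrt (x / lam\<^sup>2) \<le> \<sigma> / lam * sqrt (2 * z)"
proof -
  have "2 * \<sigma>\<^sup>2 * y \<le> 2 * \<sigma>\<^sup>2 * z" using assms(2) by (intro mult_left_mono) simp_all
  hence "x \<le> 2 * \<sigma>\<^sup>2 * z" using assms(1) by linarith
  hence "x / lam\<^sup>2 \<le> (\<sigma> / lam)\<^sup>2 * (2 * z)" using assms(3) by (simp add: power_divide field_simps)
  hence "sqrt (x / lam\<^sup>2) \<le> sqrt ((\<sigma> / lam)\<^sup>2) * sqrt (2 * z)" by (metis real_sqrt_le_mono real_sqrt_mult)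
  thus ?thesis using assms(3,4) by simp
qed

lemma (in prob_space) krr_noise_term_concentration:
  fixes zs :: "'n::finite \<Rightarrow> 'z" and \<epsilon> :: "'n \<Rightarrow> 'a \<Rightarrow> real"
  assumes pd: "pd_kernel k" and diag: "\<And>z. k z z \<le> 1" and lam: "0 < lam" and \<sigma>: "0 \<le> \<sigma>" and \<delta>: "0 < \<delta>"
    and ind: "indep_vars (\<lambda>_. borel) \<epsilon> UNIV" and sg: "\<And>i. subgaussian \<sigma> (\<epsilon> i)"
    and eb: "orthonormal_eigenbasis (gram k zs) u \<kappa>"
  shows "\<exists>A\<in>events. 1 - \<delta> \<le> prob A \<and> (\<forall>\<omega>\<in>A.
    sqrt ((\<Sum>j\<in>UNIV. \<kappa> j / (\<kappa> j + lam\<^sup>2) * (u j \<bullet> (\<chi> i. \<epsilon> i \<omega>))\<^sup>2) / lam\<^sup>2)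
      \<le> \<sigma> / lam * sqrt (2 * (max_info_gain k lam TYPE('n) + 1 + ln (1 / \<delta>))))"
proof -
  have \<kappa>: "0 \<le> \<kappa> j" for j by (rule gram_eigenvalue_nonneg[OF pd eb])
  define q where "q j = \<kappa> j / (\<kappa> j + lam\<^sup>2)" for j
  have "0 < \<kappa> j + lam\<^sup>2" for j using \<kappa>[of j] lam by (simp add: add_nonneg_pos)
  hence q: "0 \<le> q j" "q j < 1" for j using \<kappa>[of j] lam by (simp_all add: q_def)
  have info_gain: "ln (\<Prod>j\<in>UNIV. 1 / sqrt (1 - q j)) \<le> max_info_gain k lam TYPE('n)"
    using orthonormal_eigenbasis.ln_prod_inverse_sqrt_resolvent[OF eb \<kappa>, of "lam\<^sup>2"] lam
      ln_det_gram_le_max_info_gain[OF pd diag, of lam zs] by (simp add: q_def)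
  obtain A where A: "A \<in> events" and "1 - \<delta> \<le> prob A \<and> (\<forall>\<omega>\<in>A. (\<Sum>j\<in>UNIV. q j * (u j \<bullet> (\<chi> i. \<epsilon> i \<omega>))\<^sup>2)
      \<le> 2 * \<sigma>\<^sup>2 * (ln (\<Prod>j\<in>UNIV. 1 / sqrt (1 - q j)) + ln (1 / \<delta>)))"
    using subgaussian_quadratic_form_concentration[OF ind sg \<sigma> orthonormal_eigenbasis.orthonormal[OF eb] q \<delta>]
    by (rule bexE)
  hence prob_A: "1 - \<delta> \<le> prob A" and noise: "\<And>\<omega>. \<omega> \<in> A \<Longrightarrow>
      (\<Sum>j\<in>UNIV. q j * (u j \<bullet> (\<chi> i. \<epsilon> i \<omega>))\<^sup>2) \<le> 2 * \<sigma>\<^sup>2 * (ln (\<Prod>j\<in>UNIV. 1 / sqrt (1 - q j)) + ln (1 / \<delta>))"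
    by simp_all
  show ?thesis
  proof (intro bexI[OF _ A] conjI ballI)
    fix \<omega> assume "\<omega> \<in> A"
    show "sqrt ((\<Sum>j\<in>UNIV. \<kappa> j / (\<kappa> j + lam\<^sup>2) * (u j \<bullet> (\<chi> i. \<epsilon> i \<omega>))\<^sup>2) / lam\<^sup>2)
      \<le> \<sigma> / lam * sqrt (2 * (max_info_gain k lam TYPE('n) + 1 + ln (1 / \<delta>)))"
      unfolding q_def[symmetric] by (rule sqrt_divide_square_le[OF noise[OF \<open>\<omega> \<in> A\<close>] _ lam \<sigma>])
        (use info_gain in linarith)
  qed (rule prob_A)
qed

theorem lemma5:
  fixes M :: "'a measure" and k :: "'z \<Rightarrow> 'z \<Rightarrow> real" and f :: "'z \<Rightarrow> real"
    and zs :: "'n::finite \<Rightarrow> 'z" and \<epsilon> :: "'n \<Rightarrow> 'a \<Rightarrow> real"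
    and lam \<sigma> \<delta> :: real
  assumes "prob_space M"
    and "pd_kernel k" and "\<And>z. k z z \<le> 1"
    and "in_rkhs k f"
    and "lam > 0" and "\<sigma> \<ge> 0" and "\<delta> > 0"
    and "prob_space.indep_vars M (\<lambda>_. borel) \<epsilon> UNIV"
    and "\<And>i. prob_space.subgaussian M \<sigma> (\<epsilon> i)"
  shows "\<exists>A \<in> sets M. prob_space.prob M A \<ge> 1 - \<delta> \<and>
           (\<forall>\<omega>\<in>A. rkhs_norm k (krr_pred k lam zs (\<chi> i. f (zs i) + \<epsilon> i \<omega>))
              \<le> rkhs_norm k f + \<sigma> / lam *
                   sqrt (2 * (max_info_gain k lam TYPE('n) + 1 + ln (1 / \<delta>))))"
proof -
  interpret prob_space M by fact
  obtain u \<kappa> where eb: "orthonormal_eigenbasis (gram k zs) u \<kappa>"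
    using symmetric_matrix_has_orthonormal_eigenbasis[OF transpose_gram[OF assms(2)]] by blast
  obtain A where A: "A \<in> events" "1 - \<delta> \<le> prob A" and noise: "\<forall>\<omega>\<in>A.
      sqrt ((\<Sum>j\<in>UNIV. \<kappa> j / (\<kappa> j + lam\<^sup>2) * (u j \<bullet> (\<chi> i. \<epsilon> i \<omega>))\<^sup>2) / lam\<^sup>2)
        \<le> \<sigma> / lam * sqrt (2 * (max_info_gain k lam TYPE('n) + 1 + ln (1 / \<delta>)))"
    using krr_noise_term_concentration[OF assms(2,3,5,6,7,8,9) eb] by (elim bexE conjE)
  show ?thesis
  proof (intro bexI[OF _ A(1)] conjI ballI)
    fix \<omega> assume "\<omega> \<in> A"
    show "rkhs_norm k (krr_pred k lam zs (\<chi> i. f (zs i) + \<epsilon> i \<omega>))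
        \<le> rkhs_norm k f + \<sigma> / lam * sqrt (2 * (max_info_gain k lam TYPE('n) + 1 + ln (1 / \<delta>)))"
      using rkhs_norm_krr_pred_le[OF assms(2,4,5) eb, of "\<chi> i. \<epsilon> i \<omega>", unfolded vec_lambda_beta]
        add_left_mono[OF bspec[OF noise \<open>\<omega> \<in> A\<close>]] by (rule order_trans)
  qed (rule A(2))
qed

end
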